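(* Let $N\ge 3$ and $0<\gamma_1\le\dots\le\gamma_N$. There exists a sum-rate optimal spanning tree $T$ on $\{1,\dots,N\}$ in which vertices $N$ and $N-1$ both have degree $1$ and, writing $i$ for the unique neighbor of $N$ and $j$ for the unique neighbor of $N-1$, one has $\gamma_i\ge\gamma_j$.
   Context: For distinct $i,j$ put $\varphi(i,j)=\log_2\!\big(\gamma_i+\frac{\gamma_i}{\gamma_i+\gamma_j}\big)$. For a spanning tree $T$ on $\{1,\dots,N\}$ with neighbor sets $A_i^T$, define $R_{\mathrm s}(T)=\frac{1}{2(N-1)}\sum_{i=1}^N \min_{j\in A_i^T}\varphi(i,j)$. A spanning tree is called sum-rate optimal if it maximizes $R_{\mathrm s}$ over all spanning trees on $\{1,\dots,N\}$. *)

theory Defs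
  imports "HOL-Analysis.Analysis"
begin

definition tree_vertices :: "nat \<Rightarrow> nat set" where
  "tree_vertices N = {1..N}"

definition adj_rel :: "nat set set \<Rightarrow> (nat \<times> nat) set" where
  "adj_rel E = {(a, b). {a, b} \<in> E \<and> a \<noteq> b}"

definition is_spanning_tree :: "nat \<Rightarrow> nat set set \<Rightarrow> bool" where
  "is_spanning_tree N E \<longleftrightarrow>
     E \<subseteq> {{a, b} | a b. a \<in> {1..N} \<and> b \<in> {1..N} \<and> a \<noteq> b} \<and>
     card E = N - 1 \<and>
     (\<forall>a\<in>{1..N}. \<forall>b\<in>{1..N}. (a, b) \<in> (adj_rel E)\<^sup>*)"

definition nbrs :: "nat set set \<Rightarrow> nat \<Rightarrow> nat set" where
  "nbrs E i = {j. j \<noteq> i \<and> {i, j} \<in> E}"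

definition tree_degree :: "nat set set \<Rightarrow> nat \<Rightarrow> nat" where
  "tree_degree E i = card (nbrs E i)"

definition phi :: "(nat \<Rightarrow> real) \<Rightarrow> nat \<Rightarrow> nat \<Rightarrow> real" where
  "phi \<gamma> i j = log 2 (\<gamma> i + \<gamma> i / (\<gamma> i + \<gamma> j))"

definition sum_rate :: "nat \<Rightarrow> (nat \<Rightarrow> real) \<Rightarrow> nat set set \<Rightarrow> real" where
  "sum_rate N \<gamma> E =
     (1 / (2 * (real N - 1))) * (\<Sum>i = 1..N. Min (phi \<gamma> i ` nbrs E i))"

definition sum_rate_optimal :: "nat \<Rightarrow> (nat \<Rightarrow> real) \<Rightarrow> nat set set \<Rightarrow> bool" where
  "sum_rate_optimal N \<gamma> E \<longleftrightarrow> is_spanning_tree N E \<and>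
     (\<forall>E'. is_spanning_tree N E' \<longrightarrow> sum_rate N \<gamma> E' \<le> sum_rate N \<gamma> E)"

end

theory Submission
  imports Defs "HOL-Library.Transitive_Closure_Table"
begin

text \<open>Write \<open>phi \<gamma> i j = log 2 (\<gamma> i) + psi \<gamma> i j\<close>, where \<open>psi\<close> is symmetric and decreasing
  in both weights. After subtracting \<open>\<Sum>v. log 2 (\<gamma> v)\<close>, the star centred at the lightest vertex 1
  scores \<open>psi \<gamma> N 1 + (\<Sum>v = 2..N. psi \<gamma> v 1)\<close>, and no spanning tree scores more. A vertex
  \<open>v \<ge> 2\<close> scores at most \<open>psi \<gamma> v 1\<close>, since each of its neighbours is at least as heavy as 1;
  this settles the vertices off the tree path from 1 to \<open>N\<close>. On the path, a vertex scores at most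
  \<open>psi\<close> with its successor \<open>w\<close>, which is at most \<open>psi \<gamma> w 1\<close>, so its score is charged to \<open>w\<close>;
  the last vertex \<open>N\<close> thus carries two charges, the second one paying for vertex 1.
  In the star, \<open>N\<close> and \<open>N - 1\<close> are leaves with the common neighbour 1.\<close>

lemma rtrancl_path_sum_le:
  fixes m g :: "'a \<Rightarrow> 'b :: ordered_comm_monoid_add"
  assumes "rtrancl_path r x xs y" "distinct (x # xs)" "xs \<noteq> []"
    and edge: "\<And>u v. r u v \<Longrightarrow> m u \<le> g v" and last_le: "m y \<le> g y"
  shows "(\<Sum>v\<in>set (x # xs). m v) \<le> (\<Sum>v\<in>set xs. g v) + g y"
  using assms(1-3) last_le
proof (induction rule: rtrancl_path.induct)
  case (base x)
  then show ?case by simp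
next
  case (step x z zs y)
  show ?case
  proof (cases "zs = []")
    case True
    with step.hyps(2) have "z = y" by (auto elim: rtrancl_path.cases)
    with True step.prems show ?thesis
      using add_mono[OF edge[OF step.hyps(1)] step.prems(3)] by simp
  next
    case False
    with step.prems have "(\<Sum>v\<in>set (z # zs). m v) \<le> (\<Sum>v\<in>set zs. g v) + g y"
      by (intro step.IH) auto
    with step.prems add_mono[OF edge[OF step.hyps(1)]] show ?thesis
      by (simp add: add.assoc)
  qed
qed

definition psi :: "(nat \<Rightarrow> real) \<Rightarrow> nat \<Rightarrow> nat \<Rightarrow> real" where
  "psi \<gamma> i j = log 2 (1 + 1 / (\<gamma> i + \<gamma> j))"

lemma psi_commute: "psi \<gamma> i j = psi \<gamma> j i"
  by (simp add: psi_def add.commute)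

lemma psi_antimono:
  assumes "0 < \<gamma> i" "0 < \<gamma> j" "\<gamma> j \<le> \<gamma> k"
  shows "psi \<gamma> i k \<le> psi \<gamma> i j"
  unfolding psi_def using assms
  by (intro log_le_cancel_iff[THEN iffD2]) (auto intro!: divide_left_mono add_pos_pos)

lemma phi_eq_log_add_psi:
  assumes "0 < \<gamma> i" "0 < \<gamma> j"
  shows "phi \<gamma> i j = log 2 (\<gamma> i) + psi \<gamma> i j"
proof -
  have "\<gamma> i + \<gamma> i / (\<gamma> i + \<gamma> j) = \<gamma> i * (1 + 1 / (\<gamma> i + \<gamma> j))"
    using assms by (simp add: field_simps)
  moreover have "0 < 1 + 1 / (\<gamma> i + \<gamma> j)"
    using assms by (simp add: add_pos_pos)
  ultimately show ?thesis
    using assms unfolding phi_def psi_def by (simp add: log_mult)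
qed

lemma spanning_tree_nbrs_range:
  assumes "is_spanning_tree N E" "w \<in> nbrs E v"
  shows "v \<in> {1..N}" "w \<in> {1..N}"
proof -
  obtain a b where "{v, w} = {a, b}" "a \<in> {1..N}" "b \<in> {1..N}"
    using assms unfolding is_spanning_tree_def nbrs_def by blast
  then show "v \<in> {1..N}" "w \<in> {1..N}" by (auto simp: doubleton_eq_iff)
qed

lemma finite_nbrs: "is_spanning_tree N E \<Longrightarrow> finite (nbrs E v)"
  by (meson finite_atLeastAtMost finite_subset spanning_tree_nbrs_range(2) subsetI)

lemma spanning_tree_path:
  assumes "is_spanning_tree N E" "a \<in> {1..N}" "b \<in> {1..N}"
  obtains xs where "rtrancl_path (\<lambda>u v. v \<in> nbrs E u) a xs b" "distinct (a # xs)"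
proof -
  have "(a, b) \<in> (adj_rel E)\<^sup>*"
    using assms unfolding is_spanning_tree_def by blast
  moreover have "adj_rel E = {(u, v). v \<in> nbrs E u}"
    unfolding adj_rel_def nbrs_def by auto
  ultimately have "(\<lambda>u v. v \<in> nbrs E u)\<^sup>*\<^sup>* a b"
    by (simp add: rtrancl_def)
  then show ?thesis
    using that rtrancl_path_distinct unfolding rtranclp_eq_rtrancl_path by metis
qed

lemma spanning_tree_nbrs_nonempty:
  assumes "is_spanning_tree N E" "2 \<le> N" "v \<in> {1..N}"
  shows "nbrs E v \<noteq> {}"
proof -
  have "\<exists>u\<in>{1..N}. u \<noteq> v"
    using assms(2,3) by (intro bexI[of _ "if v = 1 then 2 else 1"]) auto
  then obtain u where u: "u \<in> {1..N}" "u \<noteq> v" ..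
  obtain xs where "rtrancl_path (\<lambda>u v. v \<in> nbrs E u) v xs u"
    using spanning_tree_path[OF assms(1,3) u(1)] .
  with u(2) show ?thesis by (auto elim: rtrancl_path.cases)
qed

definition star :: "nat \<Rightarrow> nat set set" where
  "star N = (\<lambda>j. {1, j}) ` {2..N}"

lemma mem_star_iff: "{a, b} \<in> star N \<longleftrightarrow> (a = 1 \<and> b \<in> {2..N}) \<or> (b = 1 \<and> a \<in> {2..N})"
  unfolding star_def image_iff doubleton_eq_iff by auto

lemma nbrs_star_leaf: "v \<in> {2..N} \<Longrightarrow> nbrs (star N) v = {1}"
  unfolding nbrs_def mem_star_iff by auto

lemma nbrs_star_center: "nbrs (star N) 1 = {2..N}"
  unfolding nbrs_def mem_star_iff by auto

lemma star_spanning_tree: "is_spanning_tree N (star N)"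
proof -
  have edges: "star N \<subseteq> {{a, b} | a b. a \<in> {1..N} \<and> b \<in> {1..N} \<and> a \<noteq> b}"
    unfolding star_def by fastforce
  have "inj_on (\<lambda>j. {1::nat, j}) {2..N}"
    by (auto simp: inj_on_def doubleton_eq_iff)
  then have card: "card (star N) = N - 1"
    unfolding star_def by (simp add: card_image)
  have "(1, a) \<in> adj_rel (star N)" "(a, 1) \<in> adj_rel (star N)" if "a \<in> {2..N}" for a
    using that unfolding adj_rel_def mem_star_iff by auto
  then have "(a, 1) \<in> (adj_rel (star N))\<^sup>* \<and> (1, a) \<in> (adj_rel (star N))\<^sup>*"
    if "a \<in> {1..N}" for a
    using that by (cases "a = 1") auto
  then have "\<forall>a\<in>{1..N}. \<forall>b\<in>{1..N}. (a, b) \<in> (adj_rel (star N))\<^sup>*"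
    by (meson rtrancl_trans)
  with edges card show ?thesis
    unfolding is_spanning_tree_def by blast
qed

context
  fixes N :: nat and \<gamma> :: "nat \<Rightarrow> real"
  assumes N2: "2 \<le> N"
    and pos: "\<And>i. i \<in> {1..N} \<Longrightarrow> 0 < \<gamma> i"
    and mono: "\<And>i j. i \<in> {1..N} \<Longrightarrow> j \<in> {1..N} \<Longrightarrow> i \<le> j \<Longrightarrow> \<gamma> i \<le> \<gamma> j"
begin

lemma psi_le_psi_1: "v \<in> {1..N} \<Longrightarrow> w \<in> {1..N} \<Longrightarrow> psi \<gamma> v w \<le> psi \<gamma> v 1"
  using psi_antimono[of \<gamma> v 1 w] pos mono[of 1 w] N2 by auto

lemma star_min_phi_sum:
  "(\<Sum>v = 1..N. Min (phi \<gamma> v ` nbrs (star N) v))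
     = (\<Sum>v = 1..N. log 2 (\<gamma> v)) + psi \<gamma> N 1 + (\<Sum>v = 2..N. psi \<gamma> v 1)"
proof -
  have center: "Min (phi \<gamma> 1 ` nbrs (star N) 1) = log 2 (\<gamma> 1) + psi \<gamma> N 1"
    unfolding nbrs_star_center
  proof (rule Min_eqI)
    show "log 2 (\<gamma> 1) + psi \<gamma> N 1 \<in> phi \<gamma> 1 ` {2..N}"
      using N2 pos phi_eq_log_add_psi psi_commute
      by (intro image_eqI[of _ _ N]) auto
    fix y assume "y \<in> phi \<gamma> 1 ` {2..N}"
    then obtain j where j: "j \<in> {2..N}" "y = phi \<gamma> 1 j" by blast
    then show "log 2 (\<gamma> 1) + psi \<gamma> N 1 \<le> y"
      using pos phi_eq_log_add_psi[of \<gamma> 1 j] psi_antimono[of \<gamma> 1 j N] mono[of j N] N2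
      by (auto simp: psi_commute)
  qed simp
  have leaves: "Min (phi \<gamma> v ` nbrs (star N) v) = log 2 (\<gamma> v) + psi \<gamma> v 1"
    if "v \<in> {2..N}" for v
    using that pos phi_eq_log_add_psi[of \<gamma> v 1] N2 by (simp add: nbrs_star_leaf)
  have split: "(\<Sum>v = 1..N. f v) = f 1 + (\<Sum>v = 2..N. f v)" for f :: "nat \<Rightarrow> real"
    using sum.atLeast_Suc_atMost[of 1 N f] N2 by (simp add: numeral_2_eq_2)
  have "(\<Sum>v = 2..N. Min (phi \<gamma> v ` nbrs (star N) v))
      = (\<Sum>v = 2..N. log 2 (\<gamma> v)) + (\<Sum>v = 2..N. psi \<gamma> v 1)"
    using leaves by (simp add: sum.distrib)
  with center show ?thesis
    using split[of "\<lambda>v. Min (phi \<gamma> v ` nbrs (star N) v)"] split[of "\<lambda>v. log 2 (\<gamma> v)"] by linarith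
qed

lemma spanning_tree_min_phi_sum_le:
  assumes T: "is_spanning_tree N E"
  shows "(\<Sum>v = 1..N. Min (phi \<gamma> v ` nbrs E v))
           \<le> (\<Sum>v = 1..N. log 2 (\<gamma> v)) + psi \<gamma> N 1 + (\<Sum>v = 2..N. psi \<gamma> v 1)"
proof -
  define m where "m v = Min (phi \<gamma> v ` nbrs E v) - log 2 (\<gamma> v)" for v
  have m_le_psi: "m v \<le> psi \<gamma> v w" if "w \<in> nbrs E v" for v w
  proof -
    have "v \<in> {1..N}" "w \<in> {1..N}"
      using spanning_tree_nbrs_range[OF T that] by auto
    then have "phi \<gamma> v w = log 2 (\<gamma> v) + psi \<gamma> v w"
      using pos by (intro phi_eq_log_add_psi) auto
    moreover have "Min (phi \<gamma> v ` nbrs E v) \<le> phi \<gamma> v w"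
      using that finite_nbrs[OF T] by (intro Min_le) auto
    ultimately show ?thesis unfolding m_def by simp
  qed
  have m_le_edge: "m v \<le> psi \<gamma> w 1" if "w \<in> nbrs E v" for v w
    using m_le_psi[OF that] psi_le_psi_1[of w v] spanning_tree_nbrs_range[OF T that]
    by (simp add: psi_commute)
  have m_le_vertex: "m v \<le> psi \<gamma> v 1" if v: "v \<in> {1..N}" for v
  proof -
    obtain w where w: "w \<in> nbrs E v"
      using spanning_tree_nbrs_nonempty[OF T N2 v] by blast
    then show ?thesis
      using m_le_psi[OF w] psi_le_psi_1[OF v] spanning_tree_nbrs_range(2)[OF T w] by fastforce
  qed
  obtain xs where path: "rtrancl_path (\<lambda>u v. v \<in> nbrs E u) 1 xs N" and "distinct (1 # xs)"
    using spanning_tree_path[OF T, of 1 N] N2 by auto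
  moreover have "xs \<noteq> []"
    using path N2 by (auto elim: rtrancl_path.cases)
  ultimately have path_sum: "(\<Sum>v\<in>set (1 # xs). m v) \<le> (\<Sum>v\<in>set xs. psi \<gamma> v 1) + psi \<gamma> N 1"
    using m_le_edge m_le_vertex N2 by (intro rtrancl_path_sum_le[OF path]) auto
  have "set xs \<subseteq> {1..N} - {1}"
    using rtrancl_path_Range[OF path] spanning_tree_nbrs_range(2)[OF T] \<open>distinct (1 # xs)\<close>
    by (fastforce elim: RangepE)
  also have "{1..N} - {1} = {2..N}"
    by auto
  finally have xs_range: "set xs \<subseteq> {2..N}" .
  have off_path: "{2..N} - set xs = {1..N} - set (1 # xs)"
    by auto
  have "(\<Sum>v = 1..N. m v) = (\<Sum>v\<in>{2..N} - set xs. m v) + (\<Sum>v\<in>set (1 # xs). m v)"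
    unfolding off_path using xs_range N2 by (intro sum.subset_diff) auto
  also have "\<dots> \<le> (\<Sum>v\<in>{2..N} - set xs. psi \<gamma> v 1) + ((\<Sum>v\<in>set xs. psi \<gamma> v 1) + psi \<gamma> N 1)"
    using m_le_vertex path_sum by (intro add_mono sum_mono) auto
  also have "\<dots> = (\<Sum>v = 2..N. psi \<gamma> v 1) + psi \<gamma> N 1"
    using xs_range by (simp add: sum.subset_diff[of "set xs" "{2..N}"])
  finally show ?thesis
    unfolding m_def by (simp add: sum_subtractf)
qed

lemma star_sum_rate_optimal: "sum_rate_optimal N \<gamma> (star N)"
  unfolding sum_rate_optimal_def
proof (intro conjI allI impI star_spanning_tree)
  fix E assume "is_spanning_tree N E"
  then have "(\<Sum>v = 1..N. Min (phi \<gamma> v ` nbrs E v)) \<le> (\<Sum>v = 1..N. Min (phi \<gamma> v ` nbrs (star N) v))"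
    unfolding star_min_phi_sum by (rule spanning_tree_min_phi_sum_le)
  moreover have "0 \<le> 1 / (2 * (real N - 1))"
    using N2 by simp
  ultimately show "sum_rate N \<gamma> E \<le> sum_rate N \<gamma> (star N)"
    unfolding sum_rate_def by (rule mult_left_mono)
qed

end

theorem lemma4:
  fixes N :: nat and \<gamma> :: "nat \<Rightarrow> real"
  assumes "N \<ge> 3"
    and "\<And>i. i \<in> {1..N} \<Longrightarrow> 0 < \<gamma> i"
    and "\<And>i j. i \<in> {1..N} \<Longrightarrow> j \<in> {1..N} \<Longrightarrow> i \<le> j \<Longrightarrow> \<gamma> i \<le> \<gamma> j"
  shows "\<exists>E. sum_rate_optimal N \<gamma> E \<and>
           tree_degree E N = 1 \<and> tree_degree E (N - 1) = 1 \<and>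
           (\<forall>i j. nbrs E N = {i} \<longrightarrow> nbrs E (N - 1) = {j} \<longrightarrow> \<gamma> i \<ge> \<gamma> j)"
proof (intro exI conjI)
  show "sum_rate_optimal N \<gamma> (star N)"
    using assms by (intro star_sum_rate_optimal) auto
  have "nbrs (star N) N = {1}" "nbrs (star N) (N - 1) = {1}"
    using assms(1) nbrs_star_leaf[of N N] nbrs_star_leaf[of "N - 1" N] by auto
  then show "tree_degree (star N) N = 1" "tree_degree (star N) (N - 1) = 1"
    and "\<forall>i j. nbrs (star N) N = {i} \<longrightarrow> nbrs (star N) (N - 1) = {j} \<longrightarrow> \<gamma> i \<ge> \<gamma> j"
    by (auto simp: tree_degree_def)
qed

end
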